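(* Let $\alpha\in(0,1]$, $F\in C^{1,\alpha}_{\mathsf h}(\mathbb H,\mathbb R^2)$ and $p\in\mathbb H$ nondegenerate for $F$. Then there exists $\varepsilon_1>0$ such that whenever $x,y\in B(p,\varepsilon_1)$ satisfy $F(x)=F(y)$ and $[x^{-1}y]^{\mathsf v}\le[x^{-1}y]^{\mathsf h}$, we have $x=y$. In particular this holds if $(x^{-1}y)^{\mathsf v}=0$.
   Context: The Heisenberg group $\mathbb H$ is $\mathbb R^3$ with product $(x^1,x^2,x^3)(y^1,y^2,y^3)=(x^1+y^1,x^2+y^2,x^3+y^3+x^1y^2-x^2y^1)$, inverse $x^{-1}=-x$. For $x\in\mathbb H$: $x^{\mathsf h}=(x^1,x^2)$, $x^{\mathsf v}=x^3$, $[x]^{\mathsf h}=|x^{\mathsf h}|$, $[x]^{\mathsf v}=\sqrt{|x^3|}$. $\mathsf d$ is a fixed distance on $\mathbb H$, left-invariant and $1$-homogeneous w.r.t. dilations $\delta_r(x)=(rx^1,rx^2,r^2x^3)$; $B(x,r)$ is the open $\mathsf d$-ball. $X_1=\partial_1-x^2\partial_3$, $X_2=\partial_2+x^1\partial_3$. $C^{1,\alpha}_{\mathsf h}(\mathbb H,\mathbb R^2)$: maps $F$ with $X_1F,X_2F$ existing everywhere and $\nabla_{\mathsf h}F=[X_1F,X_2F]$ $\alpha$-Hölder w.r.t. $\mathsf d$ on bounded sets. $p$ is nondegenerate for $F$ if $\nabla_{\mathsf h}F(p)$ is invertible. *)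

theory Defs
  imports "HOL-Analysis.Analysis"
begin

type_synonym hpt = "real \<times> real \<times> real"

fun hmul :: "hpt \<Rightarrow> hpt \<Rightarrow> hpt" where
  "hmul (x1, x2, x3) (y1, y2, y3) = (x1 + y1, x2 + y2, x3 + y3 + x1 * y2 - x2 * y1)"

fun hinv :: "hpt \<Rightarrow> hpt" where
  "hinv (x1, x2, x3) = (- x1, - x2, - x3)"

fun hdil :: "real \<Rightarrow> hpt \<Rightarrow> hpt" where
  "hdil r (x1, x2, x3) = (r * x1, r * x2, r^2 * x3)"

fun hnorm_h :: "hpt \<Rightarrow> real" where
  "hnorm_h (x1, x2, x3) = sqrt (x1^2 + x2^2)"

fun hnorm_v :: "hpt \<Rightarrow> real" where
  "hnorm_v (x1, x2, x3) = sqrt \<bar>x3\<bar>"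

fun hvert :: "hpt \<Rightarrow> real" where
  "hvert (x1, x2, x3) = x3"

definition homog_distance :: "(hpt \<Rightarrow> hpt \<Rightarrow> real) \<Rightarrow> bool" where
  "homog_distance d \<longleftrightarrow>
     (\<forall>x y. d x y = 0 \<longleftrightarrow> x = y) \<and>
     (\<forall>x y. d x y = d y x) \<and>
     (\<forall>x y z. d x z \<le> d x y + d y z) \<and>
     (\<forall>x y z. d (hmul z x) (hmul z y) = d x y) \<and>
     (\<forall>r x y. r > 0 \<longrightarrow> d (hdil r x) (hdil r y) = r * d x y)"

definition hball :: "(hpt \<Rightarrow> hpt \<Rightarrow> real) \<Rightarrow> hpt \<Rightarrow> real \<Rightarrow> hpt set" where
  "hball d x r = {y. d x y < r}"

definition hdir :: "nat \<Rightarrow> real \<Rightarrow> hpt" where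
  "hdir j t = (if j = 1 then (t, 0, 0) else (0, t, 0))"

definition hasX :: "nat \<Rightarrow> (hpt \<Rightarrow> real^2) \<Rightarrow> hpt \<Rightarrow> real^2 \<Rightarrow> bool" where
  "hasX j F x v \<longleftrightarrow> ((\<lambda>t. F (hmul x (hdir j t))) has_vector_derivative v) (at 0)"

definition Xder :: "nat \<Rightarrow> (hpt \<Rightarrow> real^2) \<Rightarrow> hpt \<Rightarrow> real^2" where
  "Xder j F x = (SOME v. hasX j F x v)"

definition hgrad :: "(hpt \<Rightarrow> real^2) \<Rightarrow> hpt \<Rightarrow> real^2^2" where
  "hgrad F x = (\<chi> i k. (if k = 1 then Xder 1 F x else Xder 2 F x) $ i)"

definition C1alpha_h :: "(hpt \<Rightarrow> hpt \<Rightarrow> real) \<Rightarrow> real \<Rightarrow> (hpt \<Rightarrow> real^2) \<Rightarrow> bool" where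
  "C1alpha_h d \<alpha> F \<longleftrightarrow>
     (\<forall>x. \<forall>j\<in>{1,2}. \<exists>v. hasX j F x v) \<and>
     (\<forall>K. (\<exists>z R. K \<subseteq> hball d z R) \<longrightarrow>
        (\<exists>C. \<forall>x\<in>K. \<forall>y\<in>K. norm (hgrad F x - hgrad F y) \<le> C * d x y powr \<alpha>))"

definition nondegenerate :: "(hpt \<Rightarrow> real^2) \<Rightarrow> hpt \<Rightarrow> bool" where
  "nondegenerate F p \<longleftrightarrow> invertible (hgrad F p)"

end

theory Submission
  imports Defs
begin

text \<open>Write \<open>y = x w\<close> with \<open>w = (a, b, c)\<close>. When \<open>[w]\<^sup>v \<le> [w]\<^sup>h\<close>, the point \<open>y\<close> is reached
  from \<open>x\<close> by a walk of six horizontal segments, of directions \<open>X\<^sub>1, X\<^sub>2\<close> and total length at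
  most \<open>5 (\<bar>a\<bar> + \<bar>b\<bar>)\<close>: after moving by \<open>a\<close> and \<open>b\<close>, a commutator of four segments produces the
  remaining vertical displacement \<open>c - a b\<close>. Along every segment the mean value theorem
  applies to \<open>F\<close>, and near \<open>p\<close> the horizontal derivatives are uniformly close to those at \<open>p\<close>
  by H\<ouml>lder continuity. Hence \<open>F y - F x\<close> differs from \<open>\<nabla>\<^sub>hF(p) (a, b)\<close> by at most half of
  \<open>m (\<bar>a\<bar> + \<bar>b\<bar>)\<close>, a lower bound for \<open>\<bar>\<nabla>\<^sub>hF(p) (a, b)\<bar>\<close> coming from invertibility. So
  \<open>F x = F y\<close> forces \<open>a = b = 0\<close>, and then \<open>c = 0\<close>. The walk stays near \<open>p\<close> because
  \<open>d 0 w\<close> dominates \<open>\<bar>a\<bar> + \<bar>b\<bar> + sqrt \<bar>c\<bar>\<close>, by compactness of the unit sphere of the latter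
  gauge and homogeneity of \<open>d\<close>.\<close>

lemma hmul_assoc: "hmul (hmul x y) z = hmul x (hmul y z)"
  by (cases x, cases y, cases z) (simp add: algebra_simps)

lemma hmul_zero [simp]: "hmul z (0,0,0) = z" "hmul (0,0,0) z = z"
  by (cases z, simp)+

lemma hmul_hinv [simp]: "hmul q (hinv q) = (0,0,0)" "hmul (hinv q) q = (0,0,0)"
  by (cases q, simp)+

lemma hmul_hinv_left: "hmul x (hmul (hinv x) y) = y"
  by (simp add: hmul_assoc[symmetric])

lemma hmul_hdir_hdir: "hmul (hdir j s) (hdir j t) = hdir j (s + t)"
  by (simp add: hdir_def)

lemma hdir_zero [simp]: "hdir j 0 = (0,0,0)"
  by (simp add: hdir_def)

section \<open>Homogeneous distances\<close>

context
  fixes d :: "hpt \<Rightarrow> hpt \<Rightarrow> real"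
  assumes d: "homog_distance d"
begin

lemma homog_distance_eq_0_iff: "d x y = 0 \<longleftrightarrow> x = y"
  using d unfolding homog_distance_def by blast

lemma homog_distance_self [simp]: "d x x = 0"
  using d unfolding homog_distance_def by blast

lemma homog_distance_sym: "d x y = d y x"
  using d unfolding homog_distance_def by blast

lemma homog_distance_triangle: "d x z \<le> d x y + d y z"
  using d unfolding homog_distance_def by blast

lemma homog_distance_left_translate: "d (hmul z x) (hmul z y) = d x y"
  using d unfolding homog_distance_def by blast

lemma homog_distance_dilation: "r > 0 \<Longrightarrow> d (hdil r x) (hdil r y) = r * d x y"
  using d unfolding homog_distance_def by blast

lemma homog_distance_nonneg: "0 \<le> d x y"
  using homog_distance_triangle[where x = x and y = y and z = x] homog_distance_sym[of y x]
  by simp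

lemma homog_distance_eq_origin: "d x y = d (0,0,0) (hmul (hinv x) y)"
  using homog_distance_left_translate[of "hinv x" x y] by simp

lemma homog_distance_step: "d z (hmul z q) = d (0,0,0) q"
  using homog_distance_left_translate[of z "(0,0,0)" q] by simp

lemma homog_distance_origin_hinv: "d (0,0,0) (hinv q) = d (0,0,0) q"
  using homog_distance_step[of q "hinv q"] homog_distance_sym by simp

lemma homog_distance_hdir: "d (0,0,0) (hdir j t) = \<bar>t\<bar> * d (0,0,0) (hdir j 1)"
proof -
  consider "t > 0" | "t = 0" | "t < 0" by linarith
  then show ?thesis
  proof cases
    case 1
    have "hdil t (0,0,0) = (0,0,0)" "hdil t (hdir j 1) = hdir j t"
      by (auto simp: hdir_def)
    then show ?thesis using homog_distance_dilation[OF 1, of "(0,0,0)" "hdir j 1"] 1 by simp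
  next
    case 2
    then show ?thesis by simp
  next
    case 3
    have "hdil (-t) (0,0,0) = (0,0,0)" "hdil (-t) (hdir j 1) = hinv (hdir j t)"
      by (auto simp: hdir_def)
    then show ?thesis
      using homog_distance_dilation[of "-t" "(0,0,0)" "hdir j 1"] 3 homog_distance_origin_hinv
      by simp
  qed
qed

lemma homog_distance_hdir_le:
  assumes "j \<in> {1,2}"
  shows "d (0,0,0) (hdir j t) \<le> (d (0,0,0) (1,0,0) + d (0,0,0) (0,1,0)) * \<bar>t\<bar>"
proof -
  have "d (0,0,0) (hdir j 1) \<le> d (0,0,0) (1,0,0) + d (0,0,0) (0,1,0)"
    using assms homog_distance_nonneg by (auto simp: hdir_def)
  then show ?thesis
    unfolding homog_distance_hdir[of j t] by (metis abs_ge_zero mult.commute mult_left_mono)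
qed

end

section \<open>Horizontal walks\<close>

lemma has_vector_derivative_at_shift:
  fixes f :: "real \<Rightarrow> 'a::real_normed_vector"
  assumes "((\<lambda>h. f (s + h)) has_vector_derivative D) (at 0)"
  shows "(f has_vector_derivative D) (at s)"
proof -
  have "((\<lambda>u. u - s) has_vector_derivative 1) (at s)"
    by (auto intro!: derivative_eq_intros)
  moreover have "((\<lambda>h. f (s + h)) has_vector_derivative D) (at ((\<lambda>u. u - s) s))"
    using assms by simp
  ultimately have "((\<lambda>h. f (s + h)) \<circ> (\<lambda>u. u - s) has_vector_derivative 1 *\<^sub>R D) (at s)"
    by (rule vector_diff_chain_at)
  then show ?thesis by (simp add: o_def)
qed

lemma horizontal_mean_value:
  fixes F :: "hpt \<Rightarrow> real^2"
  assumes X: "\<And>s. s \<in> closed_segment 0 t \<Longrightarrow> hasX j F (hmul z (hdir j s)) (D s)"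
    and close: "\<And>s. s \<in> closed_segment 0 t \<Longrightarrow> norm (D s - w) \<le> \<eta>"
  shows "norm (F (hmul z (hdir j t)) - F z - t *\<^sub>R w) \<le> \<eta> * \<bar>t\<bar>"
proof -
  define g where "g s = F (hmul z (hdir j s)) - s *\<^sub>R w" for s
  have "(g has_derivative (\<lambda>h. h *\<^sub>R (D s - w))) (at s within closed_segment 0 t)"
    if "s \<in> closed_segment 0 t" for s
  proof -
    have "((\<lambda>h. F (hmul z (hdir j (s + h)))) has_vector_derivative D s) (at 0)"
      using X[OF that] unfolding hasX_def by (simp add: hmul_assoc hmul_hdir_hdir)
    then have "((\<lambda>u. F (hmul z (hdir j u))) has_vector_derivative D s) (at s)"
      by (rule has_vector_derivative_at_shift)
    then have "(g has_vector_derivative (D s - w)) (at s)"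
      unfolding g_def by (auto intro!: derivative_eq_intros)
    then show ?thesis
      by (simp add: has_vector_derivative_def has_derivative_at_withinI)
  qed
  moreover have "onorm (\<lambda>h::real. h *\<^sub>R (D s - w)) \<le> \<eta>" if "s \<in> closed_segment 0 t" for s
    using onorm_scaleR_left[of "\<lambda>h::real. h" "D s - w"] close[OF that]
    by (simp add: onorm_id bounded_linear_ident)
  ultimately have "norm (g t - g 0) \<le> \<eta> * norm (t - 0)"
    by (intro differentiable_bound[OF convex_closed_segment]) auto
  then show ?thesis
    unfolding g_def by (simp add: algebra_simps)
qed

fun walk :: "hpt \<Rightarrow> (nat \<times> real) list \<Rightarrow> hpt" where
  "walk z [] = z"
| "walk z ((j, t) # L) = walk (hmul z (hdir j t)) L"

definition walk_length :: "(nat \<times> real) list \<Rightarrow> real" where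
  "walk_length L = (\<Sum>(j, t)\<leftarrow>L. \<bar>t\<bar>)"

definition walk_drift :: "(nat \<Rightarrow> 'a::real_vector) \<Rightarrow> (nat \<times> real) list \<Rightarrow> 'a" where
  "walk_drift v L = (\<Sum>(j, t)\<leftarrow>L. t *\<^sub>R v j)"

lemma walk_length_simps [simp]:
  "walk_length [] = 0" "walk_length ((j, t) # L) = \<bar>t\<bar> + walk_length L"
  by (simp_all add: walk_length_def)

lemma walk_drift_simps [simp]:
  "walk_drift v [] = 0" "walk_drift v ((j, t) # L) = t *\<^sub>R v j + walk_drift v L"
  by (simp_all add: walk_drift_def)

lemma walk_length_nonneg: "0 \<le> walk_length L"
  by (induction L) auto

lemma dist_walk_le:
  assumes d: "homog_distance d"
    and K: "\<And>j t. j \<in> {1,2} \<Longrightarrow> d (0,0,0) (hdir j t) \<le> K * \<bar>t\<bar>"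
    and dirs: "\<forall>(j, t)\<in>set L. j \<in> {1,2}"
  shows "d z (walk z L) \<le> K * walk_length L"
  using dirs
proof (induction L arbitrary: z)
  case Nil
  then show ?case using d by simp
next
  case (Cons jt L)
  obtain j t where jt: "jt = (j, t)" by fastforce
  let ?z = "hmul z (hdir j t)"
  have "d z (walk ?z L) \<le> d z ?z + d ?z (walk ?z L)"
    by (rule homog_distance_triangle[OF d])
  also have "d z ?z \<le> K * \<bar>t\<bar>"
    using K Cons.prems jt by (simp add: homog_distance_step[OF d])
  also have "d ?z (walk ?z L) \<le> K * walk_length L"
    using Cons jt by auto
  finally show ?case using jt by (simp add: algebra_simps)
qed

lemma walk_increment_le:
  fixes F :: "hpt \<Rightarrow> real^2" and v :: "nat \<Rightarrow> real^2"
  assumes d: "homog_distance d"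
    and K0: "0 \<le> K"
    and K: "\<And>j t. j \<in> {1,2} \<Longrightarrow> d (0,0,0) (hdir j t) \<le> K * \<bar>t\<bar>"
    and dirs: "\<forall>(j, t)\<in>set L. j \<in> {1,2}"
    and X: "\<And>x j. j \<in> {1,2} \<Longrightarrow> hasX j F x (Xder j F x)"
    and close: "\<And>q j. d p q < r \<Longrightarrow> j \<in> {1,2} \<Longrightarrow> norm (Xder j F q - v j) \<le> \<eta>"
    and start: "d p z + K * walk_length L < r"
  shows "norm (F (walk z L) - F z - walk_drift v L) \<le> \<eta> * walk_length L"
  using dirs start
proof (induction L arbitrary: z)
  case Nil
  then show ?case by simp
next
  case (Cons jt L)
  obtain j t where jt: "jt = (j, t)" by fastforce
  have j: "j \<in> {1,2}" using Cons.prems jt by auto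
  let ?z = "hmul z (hdir j t)"
  have near: "d p (hmul z (hdir j s)) + K * walk_length L < r" if "\<bar>s\<bar> \<le> \<bar>t\<bar>" for s
  proof -
    have "d p (hmul z (hdir j s)) \<le> d p z + d (0,0,0) (hdir j s)"
      using homog_distance_triangle[OF d] homog_distance_step[OF d] by metis
    also have "\<dots> \<le> d p z + K * \<bar>t\<bar>"
      using K[OF j, of s] mult_left_mono[OF that K0] by linarith
    finally show ?thesis using Cons.prems(2) jt by (simp add: distrib_left)
  qed
  have segment: "norm (F ?z - F z - t *\<^sub>R v j) \<le> \<eta> * \<bar>t\<bar>"
  proof (rule horizontal_mean_value)
    fix s assume "s \<in> closed_segment 0 t"
    then have "\<bar>s\<bar> \<le> \<bar>t\<bar>" by (auto simp: closed_segment_eq_real_ivl split: if_splits)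
    moreover have "0 \<le> K * walk_length L"
      using K0 walk_length_nonneg by simp
    ultimately have "d p (hmul z (hdir j s)) < r"
      using near by (smt (verit))
    then show "norm (Xder j F (hmul z (hdir j s)) - v j) \<le> \<eta>"
      using close j by blast
  qed (use X j in blast)
  have "norm (F (walk ?z L) - F ?z - walk_drift v L) \<le> \<eta> * walk_length L"
    using Cons.prems(1) near[of t] jt by (intro Cons.IH) auto
  with segment have "norm ((F (walk ?z L) - F ?z - walk_drift v L) + (F ?z - F z - t *\<^sub>R v j))
      \<le> \<eta> * walk_length L + \<eta> * \<bar>t\<bar>"
    by (smt (verit) norm_triangle_ineq)
  then show ?case using jt by (simp add: algebra_simps)
qed

text \<open>The last four steps form a commutator of \<open>X\<^sub>1, X\<^sub>2\<close> (in the order fixed by the sign of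
  \<open>c - a b\<close>), which moves vertically by \<open>\<plusminus>2 u\<^sup>2 = c - a b\<close>.\<close>
definition connecting_walk :: "real \<Rightarrow> real \<Rightarrow> real \<Rightarrow> (nat \<times> real) list" where
  "connecting_walk a b c = (let u = sqrt (\<bar>c - a * b\<bar> / 2) in
     if 0 \<le> c - a * b then [(1, a), (2, b), (1, u), (2, u), (1, -u), (2, -u)]
     else [(1, a), (2, b), (2, u), (1, u), (2, -u), (1, -u)])"

lemma walk_connecting_walk: "walk z (connecting_walk a b c) = hmul z (a, b, c)"
proof -
  define u where "u = sqrt (\<bar>c - a * b\<bar> / 2)"
  have uu: "u * u = \<bar>c - a * b\<bar> / 2"
    unfolding u_def by (simp add: real_sqrt_mult_self)
  show ?thesis
  proof (cases "0 \<le> c - a * b")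
    case True
    then have "c = a * b + 2 * u * u" using uu by simp
    then show ?thesis
      unfolding connecting_walk_def Let_def u_def[symmetric] if_P[OF True]
      by (cases z) (simp add: hdir_def algebra_simps)
  next
    case False
    then have "c = a * b - 2 * u * u" using uu by simp
    then show ?thesis
      unfolding connecting_walk_def Let_def u_def[symmetric] if_not_P[OF False]
      by (cases z) (simp add: hdir_def algebra_simps)
  qed
qed

lemma walk_length_connecting_walk:
  "walk_length (connecting_walk a b c) = \<bar>a\<bar> + \<bar>b\<bar> + 4 * sqrt (\<bar>c - a * b\<bar> / 2)"
  by (simp add: connecting_walk_def Let_def)

lemma walk_length_connecting_walk_le:
  assumes "\<bar>c\<bar> \<le> a\<^sup>2 + b\<^sup>2"
  shows "walk_length (connecting_walk a b c) \<le> 5 * (\<bar>a\<bar> + \<bar>b\<bar>)"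
proof -
  have "(\<bar>a\<bar> + \<bar>b\<bar>)\<^sup>2 = a\<^sup>2 + b\<^sup>2 + 2 * (\<bar>a\<bar> * \<bar>b\<bar>)"
    by (simp add: power2_eq_square algebra_simps)
  moreover have "\<bar>c - a * b\<bar> \<le> \<bar>c\<bar> + \<bar>a\<bar> * \<bar>b\<bar>"
    using abs_triangle_ineq4[of c "a * b"] by (simp add: abs_mult)
  ultimately have "\<bar>c - a * b\<bar> / 2 \<le> (\<bar>a\<bar> + \<bar>b\<bar>)\<^sup>2"
    using assms zero_le_power2[of a] zero_le_power2[of b]
      mult_nonneg_nonneg[OF abs_ge_zero[of a] abs_ge_zero[of b]]
    by linarith
  then have "sqrt (\<bar>c - a * b\<bar> / 2) \<le> sqrt ((\<bar>a\<bar> + \<bar>b\<bar>)\<^sup>2)"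
    by (rule real_sqrt_le_mono)
  then have "sqrt (\<bar>c - a * b\<bar> / 2) \<le> \<bar>a\<bar> + \<bar>b\<bar>"
    by simp
  then show ?thesis
    unfolding walk_length_connecting_walk by argo
qed

lemma walk_drift_commutator:
  "walk_drift v [(1, a), (2, b), (j, u), (k, u), (j, -u), (k, -u)] = a *\<^sub>R v 1 + b *\<^sub>R v 2"
  by (simp add: scaleR_minus_left)

lemma walk_drift_connecting_walk: "walk_drift v (connecting_walk a b c) = a *\<^sub>R v 1 + b *\<^sub>R v 2"
  unfolding connecting_walk_def Let_def
  by (simp only: if_distrib[of "walk_drift v"] walk_drift_commutator if_cancel)

lemma connecting_walk_directions: "\<forall>(j, t)\<in>set (connecting_walk a b c). j \<in> {1,2}"
  by (simp add: connecting_walk_def Let_def)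

section \<open>Comparison with a box gauge\<close>

definition box_gauge :: "hpt \<Rightarrow> real" where
  "box_gauge w = \<bar>fst w\<bar> + \<bar>fst (snd w)\<bar> + sqrt \<bar>snd (snd w)\<bar>"

lemma box_gauge_simp [simp]: "box_gauge (a, b, c) = \<bar>a\<bar> + \<bar>b\<bar> + sqrt \<bar>c\<bar>"
  by (simp add: box_gauge_def)

lemma box_gauge_nonneg: "0 \<le> box_gauge w"
  by (simp add: box_gauge_def)

lemma box_gauge_hdil: "r > 0 \<Longrightarrow> box_gauge (hdil r w) = r * box_gauge w"
  by (cases w) (simp add: abs_mult real_sqrt_mult algebra_simps)

lemma continuous_on_box_gauge: "continuous_on UNIV box_gauge"
  unfolding box_gauge_def by (intro continuous_intros)

lemma compact_box_gauge_sphere: "compact {w. box_gauge w = 1}"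
proof -
  have "\<bar>a\<bar> \<le> 1 \<and> \<bar>b\<bar> \<le> 1 \<and> \<bar>c\<bar> \<le> 1" if "box_gauge (a, b, c) = 1" for a b c
  proof -
    have "\<bar>a\<bar> + \<bar>b\<bar> + sqrt \<bar>c\<bar> = 1" using that by simp
    moreover have "0 \<le> sqrt \<bar>c\<bar>" by simp
    ultimately have "sqrt \<bar>c\<bar> \<le> 1" "\<bar>a\<bar> \<le> 1" "\<bar>b\<bar> \<le> 1" by linarith+
    then show ?thesis by simp
  qed
  then have "{w. box_gauge w = 1} = ({-1..1} \<times> {-1..1} \<times> {-1..1}) \<inter> {w. box_gauge w = 1}"
    by (force simp: abs_le_iff)
  moreover have "closed {w. box_gauge w = 1}"
    by (rule closed_Collect_eq[OF continuous_on_box_gauge]) (intro continuous_intros)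
  ultimately show ?thesis
    by (metis compact_Int_closed compact_Times compact_Icc)
qed

lemma hmul_hinv_eq:
  "hmul (hinv v) w = (fst w - fst v, fst (snd w) - fst (snd v),
     snd (snd w) - snd (snd v) - fst v * fst (snd w) + fst (snd v) * fst w)"
  by (cases v, cases w) simp

context
  fixes d :: "hpt \<Rightarrow> hpt \<Rightarrow> real"
  assumes d: "homog_distance d"
begin

lemma homog_distance_origin_le_connecting_walk:
  "d (0,0,0) q \<le> (d (0,0,0) (1,0,0) + d (0,0,0) (0,1,0)) *
     walk_length (connecting_walk (fst q) (fst (snd q)) (snd (snd q)))"
  using dist_walk_le[OF d homog_distance_hdir_le[OF d] connecting_walk_directions, of "(0,0,0)"]
  by (cases q) (simp add: walk_connecting_walk)

lemma continuous_on_homog_distance_origin: "continuous_on UNIV (\<lambda>w. d (0,0,0) w)"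
proof (rule continuous_at_imp_continuous_on, intro ballI)
  fix v :: hpt
  define G where "G w = (d (0,0,0) (1,0,0) + d (0,0,0) (0,1,0)) *
    walk_length (connecting_walk (fst (hmul (hinv v) w)) (fst (snd (hmul (hinv v) w)))
      (snd (snd (hmul (hinv v) w))))" for w
  have bound: "norm (d (0,0,0) w - d (0,0,0) v) \<le> G w" for w
  proof -
    have "d v w \<le> G w"
      unfolding G_def homog_distance_eq_origin[OF d, of v w]
      by (rule homog_distance_origin_le_connecting_walk)
    moreover have "d (0,0,0) w \<le> d (0,0,0) v + d v w" "d (0,0,0) v \<le> d (0,0,0) w + d w v"
      by (rule homog_distance_triangle[OF d])+
    ultimately show ?thesis
      using homog_distance_sym[OF d, of w v]
      unfolding real_norm_def abs_le_iff by (intro conjI) linarith+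
  qed
  have "(G \<longlongrightarrow> G v) (at v)"
    unfolding G_def hmul_hinv_eq walk_length_connecting_walk by (intro tendsto_intros) auto
  moreover have "G v = 0"
    unfolding G_def hmul_hinv fst_conv snd_conv walk_length_connecting_walk by simp
  ultimately have "(G \<longlongrightarrow> 0) (at v)" by simp
  then have "((\<lambda>w. d (0,0,0) w - d (0,0,0) v) \<longlongrightarrow> 0) (at v)"
    by (rule Lim_null_comparison[OF always_eventually[OF allI[OF bound]]])
  then show "isCont (\<lambda>w. d (0,0,0) w) v"
    unfolding isCont_def by (rule LIM_zero_cancel)
qed

lemma box_gauge_le_homog_distance: "\<exists>c>0. \<forall>w. c * box_gauge w \<le> d (0,0,0) w"
proof -
  have "(1,0,0) \<in> {w. box_gauge w = 1}" by simp
  then obtain w0 where w0: "box_gauge w0 = 1"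
      and min: "\<And>w. box_gauge w = 1 \<Longrightarrow> d (0,0,0) w0 \<le> d (0,0,0) w"
    using continuous_attains_inf[OF compact_box_gauge_sphere _
        continuous_on_subset[OF continuous_on_homog_distance_origin]] by blast
  have "w0 \<noteq> (0,0,0)" using w0 by auto
  then have pos: "d (0,0,0) w0 > 0"
    using homog_distance_nonneg[OF d] homog_distance_eq_0_iff[OF d] by (metis order_le_less)
  have "d (0,0,0) w0 * box_gauge w \<le> d (0,0,0) w" for w
  proof (cases "box_gauge w = 0")
    case True
    then show ?thesis using homog_distance_nonneg[OF d] by simp
  next
    case False
    define r where "r = box_gauge w"
    have r: "r > 0" using False box_gauge_nonneg[of w] r_def by linarith
    have "box_gauge (hdil (1/r) w) = 1"
      using r by (simp add: box_gauge_hdil r_def)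
    then have "d (0,0,0) w0 \<le> d (0,0,0) (hdil (1/r) w)" by (rule min)
    moreover have "d (0,0,0) w = r * d (0,0,0) (hdil (1/r) w)"
      using homog_distance_dilation[OF d r, of "(0,0,0)" "hdil (1/r) w"] r
      by (cases w) (simp add: power2_eq_square)
    ultimately show ?thesis using r by (simp add: r_def mult.commute)
  qed
  then show ?thesis using pos by blast
qed

end

section \<open>The horizontal gradient\<close>

lemma Xder_hasX:
  assumes "C1alpha_h d \<alpha> F" and "j \<in> {1,2}"
  shows "hasX j F x (Xder j F x)"
  using assms unfolding C1alpha_h_def Xder_def by (metis someI_ex)

lemma norm_column_le: "norm (column k A) \<le> 2 * norm (A :: real^2^2)"
proof -
  have "norm (column k A) \<le> (\<Sum>i\<in>UNIV. \<bar>column k A $ i\<bar>)"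
    by (rule norm_le_l1_cart)
  also have "\<dots> = \<bar>A $ 1 $ k\<bar> + \<bar>A $ 2 $ k\<bar>"
    by (simp add: sum_2 column_def)
  also have "\<dots> \<le> norm A + norm A"
    using order_trans[OF component_le_norm_cart Finite_Cartesian_Product.norm_nth_le]
    by (intro add_mono)
  finally show ?thesis by simp
qed

lemma norm_Xder_diff_le:
  assumes "j \<in> {1,2}"
  shows "norm (Xder j F x - Xder j F y) \<le> 2 * norm (hgrad F x - hgrad F y)"
proof -
  have "Xder j F x - Xder j F y = column (if j = 1 then 1 else 2) (hgrad F x - hgrad F y)"
    using assms by (auto simp: vec_eq_iff hgrad_def column_def)
  then show ?thesis by (simp add: norm_column_le)
qed

lemma hgrad_mult_vec: "hgrad F p *v z = z $ 1 *\<^sub>R Xder 1 F p + z $ 2 *\<^sub>R Xder 2 F p"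
  by (simp add: vec_eq_iff matrix_vector_mult_def hgrad_def sum_2 mult.commute)

lemma invertible_hgrad_lower_bound:
  assumes "invertible (hgrad F p)"
  shows "\<exists>m>0. \<forall>a b. m * (\<bar>a\<bar> + \<bar>b\<bar>) \<le> norm (a *\<^sub>R Xder 1 F p + b *\<^sub>R Xder 2 F p)"
proof -
  obtain M where M: "M ** hgrad F p = mat 1"
    using assms unfolding invertible_def by blast
  obtain B where B: "B > 0" "\<And>x. norm (M *v x) \<le> B * norm x"
    using linear_bounded_pos[OF matrix_vector_mul_linear[of M]] by blast
  have "1 / (2 * B) * (\<bar>a\<bar> + \<bar>b\<bar>) \<le> norm (a *\<^sub>R Xder 1 F p + b *\<^sub>R Xder 2 F p)" for a b
  proof -
    define z :: "real^2" where "z = (\<chi> i. if i = 1 then a else b)"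
    have z: "z $ 1 = a" "z $ 2 = b" by (simp_all add: z_def)
    have "z = M *v (hgrad F p *v z)"
      by (simp add: matrix_vector_mul_assoc M)
    then have "norm z \<le> B * norm (a *\<^sub>R Xder 1 F p + b *\<^sub>R Xder 2 F p)"
      using B(2) by (metis hgrad_mult_vec z)
    moreover have "\<bar>a\<bar> \<le> norm z" "\<bar>b\<bar> \<le> norm z"
      using component_le_norm_cart[of z 1] component_le_norm_cart[of z 2] z by simp_all
    ultimately show ?thesis using B(1) by (simp add: field_simps)
  qed
  moreover have "1 / (2 * B) > 0" using B(1) by simp
  ultimately show ?thesis by blast
qed

lemma Xder_close_near:
  assumes d: "homog_distance d" and "0 < \<alpha>" and F: "C1alpha_h d \<alpha> F" and "\<eta> > 0"
  shows "\<exists>r>0. \<forall>q j. d p q < r \<longrightarrow> j \<in> {1,2} \<longrightarrow> norm (Xder j F q - Xder j F p) \<le> \<eta>"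
proof -
  obtain C where C: "\<And>x y. x \<in> hball d p 1 \<Longrightarrow> y \<in> hball d p 1 \<Longrightarrow>
      norm (hgrad F x - hgrad F y) \<le> C * d x y powr \<alpha>"
    using F unfolding C1alpha_h_def by (metis order_refl)
  define C' where "C' = max C 0"
  define r where "r = min 1 ((\<eta> / (2 * C' + 1)) powr (1 / \<alpha>))"
  have C': "0 \<le> C'" by (simp add: C'_def)
  have r: "0 < r" "r \<le> 1" using assms C' by (simp_all add: r_def)
  have "r powr \<alpha> \<le> ((\<eta> / (2 * C' + 1)) powr (1 / \<alpha>)) powr \<alpha>"
    using r \<open>0 < \<alpha>\<close> by (intro powr_mono2) (simp_all add: r_def)
  also have "\<dots> = \<eta> / (2 * C' + 1)"
    using assms C' by (simp add: powr_powr)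
  finally have r_powr: "r powr \<alpha> \<le> \<eta> / (2 * C' + 1)" .
  have "norm (Xder j F q - Xder j F p) \<le> \<eta>" if q: "d p q < r" and j: "j \<in> {1,2}" for q j
  proof -
    have "q \<in> hball d p 1" "p \<in> hball d p 1"
      using q r d by (simp_all add: hball_def)
    then have "norm (hgrad F q - hgrad F p) \<le> C * d p q powr \<alpha>"
      using C[of q p] homog_distance_sym[OF d, of q p] by simp
    also have "\<dots> \<le> C' * r powr \<alpha>"
      using q \<open>0 < \<alpha>\<close> homog_distance_nonneg[OF d, of p q] C'
      by (intro mult_mono powr_mono2) (simp_all add: C'_def)
    also have "\<dots> \<le> C' * (\<eta> / (2 * C' + 1))"
      using r_powr C' by (rule mult_left_mono)
    finally have "norm (Xder j F q - Xder j F p) \<le> 2 * (C' * (\<eta> / (2 * C' + 1)))"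
      using norm_Xder_diff_le[OF j, of F q p] by linarith
    also have "\<dots> \<le> \<eta>"
      using C' \<open>\<eta> > 0\<close> by (simp add: field_simps)
    finally show ?thesis .
  qed
  then show ?thesis using r by blast
qed

section \<open>Injectivity in the horizontal cone\<close>

lemma hnorm_v_le_hnorm_h_iff: "hnorm_v w \<le> hnorm_h w \<longleftrightarrow> \<bar>hvert w\<bar> \<le> (fst w)\<^sup>2 + (fst (snd w))\<^sup>2"
  by (cases w) simp

lemma eq_if_F_eq_horizontal_near:
  fixes F :: "hpt \<Rightarrow> real^2" and v :: "nat \<Rightarrow> real^2"
  assumes d: "homog_distance d"
    and X: "\<And>x j. j \<in> {1,2} \<Longrightarrow> hasX j F x (Xder j F x)"
    and m: "m > 0" "\<And>a b. m * (\<bar>a\<bar> + \<bar>b\<bar>) \<le> norm (a *\<^sub>R v 1 + b *\<^sub>R v 2)"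
    and r: "r > 0"
    and close: "\<And>q j. d p q < r \<Longrightarrow> j \<in> {1,2} \<Longrightarrow> norm (Xder j F q - v j) \<le> m / 10"
  shows "\<exists>\<epsilon>>0. \<forall>x\<in>hball d p \<epsilon>. \<forall>y\<in>hball d p \<epsilon>.
    F x = F y \<and> hnorm_v (hmul (hinv x) y) \<le> hnorm_h (hmul (hinv x) y) \<longrightarrow> x = y"
proof -
  obtain c0 where c0: "c0 > 0" "\<And>w. c0 * box_gauge w \<le> d (0,0,0) w"
    using box_gauge_le_homog_distance[OF d] by blast
  define K where "K = d (0,0,0) (1,0,0) + d (0,0,0) (0,1,0)"
  have K0: "0 \<le> K"
    using homog_distance_nonneg[OF d] by (simp add: K_def add_nonneg_nonneg)
  have K_step: "\<And>j t. j \<in> {1,2} \<Longrightarrow> d (0,0,0) (hdir j t) \<le> K * \<bar>t\<bar>"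
    unfolding K_def by (rule homog_distance_hdir_le[OF d])
  define \<epsilon> where "\<epsilon> = r * c0 / (c0 + 10 * K)"
  have pos: "c0 + 10 * K > 0" using c0(1) K0 by linarith
  then have \<epsilon>0: "\<epsilon> > 0" using r c0(1) by (simp add: \<epsilon>_def)
  have "\<epsilon> + K * (10 * \<epsilon> / c0) = \<epsilon> * (c0 + 10 * K) / c0"
    using c0(1) by (simp add: field_simps)
  also have "\<dots> = r" using pos c0(1) by (simp add: \<epsilon>_def)
  finally have \<epsilon>: "\<epsilon> + K * (10 * \<epsilon> / c0) = r" .
  have key: "x = y" if x: "d p x < \<epsilon>" and y: "d p y < \<epsilon>" and Fxy: "F x = F y"
    and cone: "\<bar>c\<bar> \<le> a\<^sup>2 + b\<^sup>2" and w: "hmul (hinv x) y = (a, b, c)" for x y a b c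
  proof -
    define L where "L = connecting_walk a b c"
    have L: "walk_length L \<le> 5 * (\<bar>a\<bar> + \<bar>b\<bar>)"
      unfolding L_def using cone by (rule walk_length_connecting_walk_le)
    have "c0 * (\<bar>a\<bar> + \<bar>b\<bar>) \<le> d x y"
      using c0 real_sqrt_ge_zero[of "\<bar>c\<bar>"] homog_distance_eq_origin[OF d, of x y] w
      by (smt (verit) box_gauge_simp mult_left_mono)
    also have "\<dots> < 2 * \<epsilon>"
      using homog_distance_triangle[OF d, where x = x and y = p and z = y] homog_distance_sym[OF d, of x p] x y by simp
    finally have "c0 * walk_length L < 10 * \<epsilon>"
      using mult_left_mono[OF L less_imp_le[OF c0(1)]] by linarith
    then have "K * walk_length L \<le> K * (10 * \<epsilon> / c0)"
      using K0 c0(1) by (intro mult_left_mono) (simp_all add: pos_le_divide_eq mult.commute)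
    then have "d p x + K * walk_length L < r" using x \<epsilon> by linarith
    then have "norm (F (walk x L) - F x - walk_drift v L) \<le> m / 10 * walk_length L"
      using walk_increment_le[OF d K0 K_step _ X close] connecting_walk_directions
      unfolding L_def by blast
    moreover have "walk x L = y"
      unfolding L_def walk_connecting_walk w[symmetric] hmul_hinv_left ..
    moreover have "walk_drift v L = a *\<^sub>R v 1 + b *\<^sub>R v 2"
      unfolding L_def by (rule walk_drift_connecting_walk)
    ultimately have "norm (a *\<^sub>R v 1 + b *\<^sub>R v 2) \<le> m / 10 * walk_length L"
      using Fxy by (metis diff_self diff_0 norm_minus_cancel)
    also have "\<dots> \<le> m / 10 * (5 * (\<bar>a\<bar> + \<bar>b\<bar>))"
      using L m(1) by (intro mult_left_mono) simp_all
    finally have "m * (\<bar>a\<bar> + \<bar>b\<bar>) \<le> m * 0"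
      using m(2)[of a b] mult_nonneg_nonneg[OF less_imp_le[OF m(1)], of "\<bar>a\<bar> + \<bar>b\<bar>"]
      by linarith
    then have "\<bar>a\<bar> + \<bar>b\<bar> \<le> 0"
      using m(1) by (simp only: mult_le_cancel_left_pos)
    then have "a = 0" "b = 0"
      using abs_ge_zero[of a] abs_ge_zero[of b] by linarith+
    then show ?thesis using cone w hmul_hinv_left[of x y] by simp
  qed
  show ?thesis
  proof (intro exI[of _ \<epsilon>] conjI ballI impI \<epsilon>0)
    fix x y
    assume "x \<in> hball d p \<epsilon>" "y \<in> hball d p \<epsilon>"
      and "F x = F y \<and> hnorm_v (hmul (hinv x) y) \<le> hnorm_h (hmul (hinv x) y)"
    moreover obtain a b c where "hmul (hinv x) y = (a, b, c)" by (cases "hmul (hinv x) y")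
    ultimately show "x = y" using key[of x y c a b] by (simp add: hball_def)
  qed
qed

theorem mainTheorem3:
  fixes d :: "hpt \<Rightarrow> hpt \<Rightarrow> real" and \<alpha> :: real
    and F :: "hpt \<Rightarrow> real^2" and p :: hpt
  assumes "homog_distance d"
    and "0 < \<alpha>" and "\<alpha> \<le> 1"
    and "C1alpha_h d \<alpha> F"
    and "nondegenerate F p"
  shows "\<exists>\<epsilon>1>0.
     (\<forall>x\<in>hball d p \<epsilon>1. \<forall>y\<in>hball d p \<epsilon>1.
        F x = F y \<and> hnorm_v (hmul (hinv x) y) \<le> hnorm_h (hmul (hinv x) y) \<longrightarrow> x = y) \<and>
     (\<forall>x\<in>hball d p \<epsilon>1. \<forall>y\<in>hball d p \<epsilon>1.
        F x = F y \<and> hvert (hmul (hinv x) y) = 0 \<longrightarrow> x = y)"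
proof -
  obtain m where m: "m > 0"
    "\<And>a b. m * (\<bar>a\<bar> + \<bar>b\<bar>) \<le> norm (a *\<^sub>R Xder 1 F p + b *\<^sub>R Xder 2 F p)"
    using invertible_hgrad_lower_bound assms(5) unfolding nondegenerate_def by blast
  obtain r where "r > 0"
    and "\<And>q j. d p q < r \<Longrightarrow> j \<in> {1,2} \<Longrightarrow> norm (Xder j F q - Xder j F p) \<le> m / 10"
    using Xder_close_near[OF assms(1,2,4), of "m / 10"] m(1)
    by (metis zero_less_divide_iff zero_less_numeral)
  from eq_if_F_eq_horizontal_near[OF assms(1) Xder_hasX[OF assms(4)] m this]
  obtain \<epsilon> where "\<epsilon> > 0" and "\<forall>x\<in>hball d p \<epsilon>. \<forall>y\<in>hball d p \<epsilon>.
      F x = F y \<and> hnorm_v (hmul (hinv x) y) \<le> hnorm_h (hmul (hinv x) y) \<longrightarrow> x = y"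
    by blast
  moreover have "hnorm_v w \<le> hnorm_h w" if "hvert w = 0" for w
    using that by (simp add: hnorm_v_le_hnorm_h_iff)
  ultimately show ?thesis by blast
qed

end
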